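(* Let $P$ be a special product rule, $\Sigma$ a finite alphabet, $\mathcal A=\langle X,F,\Delta\rangle$ a polynomial $P$-automaton with finite $X$, and $x_1\in X$. For $n\in\mathbb N$ let $I_n\subseteq\mathbb Q[X]$ be the polynomial ideal generated by $\{\tilde\Delta_wx_1: w\in\Sigma^*, |w|\le n\}$ (note $I_n\subseteq\mathbb Q_0[X]$). Then for all $n$: (1) $I_n\subseteq I_{n+1}$; (2) $\tilde\Delta_a(I_n)\subseteq I_{n+1}$ for every $a\in\Sigma$; (3) $I_{n+1}=I_n+\langle\tilde\Delta_a(I_n): a\in\Sigma\rangle$, where $\langle S\rangle$ is the ideal generated by $S$; (4) if $I_n=I_{n+1}$ then $I_n=I_{n+m}$ for all $m\ge0$.
   Context: $\mathbb Q_0[X]$ is the set of polynomials of $\mathbb Q[X]$ with zero constant term. Terms over $X$ are generated by $u,v::=x\mid 0\mid c\cdot u\mid u+v\mid u*v$; a product rule is a term $P$ over $\{x,\dot x,y,\dot y\}$. $u\approx v$ iff $u,v$ denote the same polynomial. $P$ is special if $P(x+y,\dot x+\dot y,z,\dot z)\approx P(x,\dot x,z,\dot z)+P(y,\dot y,z,\dot z)$, $P(x,\dot x,y*z,P(y,\dot y,z,\dot z))\approx P(x*y,P(x,\dot x,y,\dot y),z,\dot z)$, $P(x,\dot x,y,\dot y)\approx P(y,\dot y,x,\dot x)$. For special $P$, every $D:X\to\mathbb Q_0[X]$ has a unique $\mathbb Q$-linear extension $\tilde D:\mathbb Q_0[X]\to\mathbb Q_0[X]$ with $\tilde Dx=Dx$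 and $\tilde D(\alpha\beta)=P(\alpha,\tilde D\alpha,\beta,\tilde D\beta)$. A polynomial $P$-automaton is $\mathcal A=\langle X,F,\Delta\rangle$ with $F:X\to\mathbb Q$ and $\Delta_a:X\to\mathbb Q_0[X]$ for $a\in\Sigma$. For words, $\tilde\Delta_\varepsilon\alpha=\alpha$ and $\tilde\Delta_{aw}\alpha=\tilde\Delta_w(\tilde\Delta_a\alpha)$. *)

theory Defs
  imports Complex_Main "HOL-Library.Poly_Mapping"
begin

text \<open>Polynomials in variables of type 'v with rational coefficients:
  finitely supported maps from monomials (exponent vectors) to coefficients.\<close>
type_synonym 'v mpoly = "('v \<Rightarrow>\<^sub>0 nat) \<Rightarrow>\<^sub>0 rat"

definition PVar :: "'v \<Rightarrow> 'v mpoly" where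
  "PVar x = Poly_Mapping.single (Poly_Mapping.single x 1) 1"

definition PConst :: "rat \<Rightarrow> 'v mpoly" where
  "PConst c = Poly_Mapping.single 0 c"

definition Q0 :: "'v mpoly set" where
  "Q0 = {p. Poly_Mapping.lookup p 0 = 0}"

datatype 'v trm = TVar 'v | TZero | TScal rat "'v trm" | TAdd "'v trm" "'v trm" | TMul "'v trm" "'v trm"

primrec tsem :: "('v \<Rightarrow> 'w mpoly) \<Rightarrow> 'v trm \<Rightarrow> 'w mpoly" where
  "tsem \<rho> (TVar x) = \<rho> x"
| "tsem \<rho> TZero = 0"
| "tsem \<rho> (TScal c u) = PConst c * tsem \<rho> u"
| "tsem \<rho> (TAdd u v) = tsem \<rho> u + tsem \<rho> v"
| "tsem \<rho> (TMul u v) = tsem \<rho> u * tsem \<rho> v"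

text \<open>Variables of a product rule: x, x-dot, y, y-dot.\<close>
datatype pv = Px | Pdx | Py | Pdy

type_synonym prule = "pv trm"

definition papp :: "prule \<Rightarrow> 'w mpoly \<Rightarrow> 'w mpoly \<Rightarrow> 'w mpoly \<Rightarrow> 'w mpoly \<Rightarrow> 'w mpoly" where
  "papp P a da b db = tsem (\<lambda>v. case v of Px \<Rightarrow> a | Pdx \<Rightarrow> da | Py \<Rightarrow> b | Pdy \<Rightarrow> db) P"

datatype sv = Sx | Sdx | Sy | Sdy | Sz | Sdz

definition special :: "prule \<Rightarrow> bool" where
  "special P \<longleftrightarrow>
     papp P (PVar Sx + PVar Sy) (PVar Sdx + PVar Sdy) (PVar Sz) (PVar Sdz)
       = papp P (PVar Sx) (PVar Sdx) (PVar Sz) (PVar Sdz) + papp P (PVar Sy) (PVar Sdy) (PVar Sz) (PVar Sdz)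
   \<and> papp P (PVar Sx) (PVar Sdx) (PVar Sy * PVar Sz) (papp P (PVar Sy) (PVar Sdy) (PVar Sz) (PVar Sdz))
       = papp P (PVar Sx * PVar Sy) (papp P (PVar Sx) (PVar Sdx) (PVar Sy) (PVar Sdy)) (PVar Sz) (PVar Sdz)
   \<and> papp P (PVar Sx) (PVar Sdx) (PVar Sy) (PVar Sdy) = papp P (PVar Sy) (PVar Sdy) (PVar Sx) (PVar Sdx)"

definition is_ext :: "prule \<Rightarrow> ('x \<Rightarrow> 'x mpoly) \<Rightarrow> ('x mpoly \<Rightarrow> 'x mpoly) \<Rightarrow> bool" where
  "is_ext P D Dt \<longleftrightarrow>
     (\<forall>\<alpha>\<in>Q0. Dt \<alpha> \<in> Q0)
   \<and> (\<forall>\<alpha>\<in>Q0. \<forall>\<beta>\<in>Q0. \<forall>c. Dt (PConst c * \<alpha> + \<beta>) = PConst c * Dt \<alpha> + Dt \<beta>)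
   \<and> (\<forall>x. Dt (PVar x) = D x)
   \<and> (\<forall>\<alpha>\<in>Q0. \<forall>\<beta>\<in>Q0. Dt (\<alpha> * \<beta>) = papp P \<alpha> (Dt \<alpha>) \<beta> (Dt \<beta>))"

fun dword :: "('a \<Rightarrow> 'x mpoly \<Rightarrow> 'x mpoly) \<Rightarrow> 'a list \<Rightarrow> 'x mpoly \<Rightarrow> 'x mpoly" where
  "dword Dt [] \<alpha> = \<alpha>"
| "dword Dt (a # w) \<alpha> = dword Dt w (Dt a \<alpha>)"

definition is_ideal :: "'x mpoly set \<Rightarrow> bool" where
  "is_ideal I \<longleftrightarrow> 0 \<in> I \<and> (\<forall>p\<in>I. \<forall>q\<in>I. p + q \<in> I) \<and> (\<forall>r. \<forall>p\<in>I. r * p \<in> I)"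

definition ideal_gen :: "'x mpoly set \<Rightarrow> 'x mpoly set" where
  "ideal_gen S = \<Inter>{I. is_ideal I \<and> S \<subseteq> I}"

definition In :: "('a \<Rightarrow> 'x mpoly \<Rightarrow> 'x mpoly) \<Rightarrow> 'x \<Rightarrow> nat \<Rightarrow> 'x mpoly set" where
  "In Dt x1 n = ideal_gen {dword Dt w (PVar x1) | w. length w \<le> n}"

end

theory Submission
  imports Defs
begin

text \<open>Every generator of \<open>I\<^sub>n\<^sub>+\<^sub>1\<close> is a generator of \<open>I\<^sub>n\<close> or \<open>\<Delta>\<^sub>a\<close> applied to one; this gives (1)
  and one inclusion of (3). For (2) it suffices that \<open>\<Delta>\<^sub>a(r q)\<close> lies in every ideal \<open>I\<close>
  containing \<open>q\<close> and \<open>\<Delta>\<^sub>a q\<close>: write \<open>r = c + r\<^sub>0\<close> with \<open>r\<^sub>0 \<in> \<bbbQ>\<^sub>0[X]\<close>; then modulo \<open>I\<close>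
  \<open>\<Delta>\<^sub>a(r\<^sub>0 q) = P(r\<^sub>0, \<Delta>\<^sub>a r\<^sub>0, q, \<Delta>\<^sub>a q) \<equiv> P(r\<^sub>0, \<Delta>\<^sub>a r\<^sub>0, 0, 0) = \<Delta>\<^sub>a(r\<^sub>0 \<cdot> 0) = 0\<close>,
  since a term is compatible with congruence modulo an ideal. Hence the elements \<open>q\<close> with
  \<open>q, \<Delta>\<^sub>a q \<in> I\<^sub>n\<^sub>+\<^sub>1\<close> form an ideal containing the generators of \<open>I\<^sub>n\<close>. Finally the right-hand
  side of (3) depends on \<open>I\<^sub>n\<close> only, so (4) follows by induction on \<open>m\<close>.\<close>

lemma monomial_add_eq_0_iff: "(l::'v \<Rightarrow>\<^sub>0 nat) + q = 0 \<longleftrightarrow> l = 0 \<and> q = 0"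
  by transfer (auto simp: fun_eq_iff)

lemma lookup_mult_zero:
  "Poly_Mapping.lookup ((f::'v mpoly) * g) 0 = Poly_Mapping.lookup f 0 * Poly_Mapping.lookup g 0"
proof -
  have "(\<lambda>l. Poly_Mapping.lookup f l * (\<Sum>q. Poly_Mapping.lookup g q when 0 = l + q))
      = (\<lambda>l. if l = 0 then Poly_Mapping.lookup f 0 * Poly_Mapping.lookup g 0 else 0)"
    by (auto simp: fun_eq_iff when_def monomial_add_eq_0_iff)
  then show ?thesis
    by (simp only: lookup_mult) simp
qed

lemma PVar_in_Q0: "PVar x \<in> Q0"
  by (auto simp: Q0_def PVar_def lookup_single when_def dest: arg_cong[where f = "\<lambda>m. Poly_Mapping.lookup m x"])

lemma PConst_1 [simp]: "PConst 1 = 1"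
  by (simp add: PConst_def)

lemma diff_PConst_const_term_in_Q0: "r - PConst (Poly_Mapping.lookup r 0) \<in> Q0"
  by (simp add: Q0_def PConst_def lookup_minus)

lemma ideal_zero_mem: "is_ideal I \<Longrightarrow> 0 \<in> I"
  by (simp add: is_ideal_def)

lemma ideal_add_mem: "is_ideal I \<Longrightarrow> p \<in> I \<Longrightarrow> q \<in> I \<Longrightarrow> p + q \<in> I"
  by (simp add: is_ideal_def)

lemma ideal_mult_mem: "is_ideal I \<Longrightarrow> p \<in> I \<Longrightarrow> r * p \<in> I"
  by (simp add: is_ideal_def)

lemma is_ideal_Q0: "is_ideal Q0"
  by (simp add: is_ideal_def Q0_def lookup_add lookup_mult_zero)

lemma is_ideal_ideal_gen: "is_ideal (ideal_gen S)"
  unfolding is_ideal_def ideal_gen_def by blast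

lemma ideal_gen_superset: "S \<subseteq> ideal_gen S"
  unfolding ideal_gen_def by blast

lemma ideal_gen_least: "is_ideal I \<Longrightarrow> S \<subseteq> I \<Longrightarrow> ideal_gen S \<subseteq> I"
  unfolding ideal_gen_def by blast

lemma ideal_gen_mono: "S \<subseteq> T \<Longrightarrow> ideal_gen S \<subseteq> ideal_gen T"
  by (meson ideal_gen_least ideal_gen_superset is_ideal_ideal_gen order_trans)

definition ideal_sum :: "'x mpoly set \<Rightarrow> 'x mpoly set \<Rightarrow> 'x mpoly set" where
  "ideal_sum I J = {p + q | p q. p \<in> I \<and> q \<in> J}"

lemma is_ideal_ideal_sum:
  assumes I: "is_ideal I" and J: "is_ideal J"
  shows "is_ideal (ideal_sum I J)"
  unfolding is_ideal_def ideal_sum_def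
proof (intro conjI ballI allI)
  show "0 \<in> {p + q | p q. p \<in> I \<and> q \<in> J}"
    using ideal_zero_mem[OF I] ideal_zero_mem[OF J] by force
next
  fix x y assume "x \<in> {p + q | p q. p \<in> I \<and> q \<in> J}" "y \<in> {p + q | p q. p \<in> I \<and> q \<in> J}"
  then obtain p q p' q' where "x = p + q" "y = p' + q'" "p \<in> I" "p' \<in> I" "q \<in> J" "q' \<in> J"
    by blast
  moreover have "p + q + (p' + q') = (p + p') + (q + q')"
    by (simp add: algebra_simps)
  ultimately show "x + y \<in> {p + q | p q. p \<in> I \<and> q \<in> J}"
    using ideal_add_mem[OF I] ideal_add_mem[OF J] by blast
next
  fix r x assume "x \<in> {p + q | p q. p \<in> I \<and> q \<in> J}"
  then obtain p q where "x = p + q" "p \<in> I" "q \<in> J"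
    by blast
  moreover have "r * (p + q) = r * p + r * q"
    by (simp add: algebra_simps)
  ultimately show "r * x \<in> {p + q | p q. p \<in> I \<and> q \<in> J}"
    using ideal_mult_mem[OF I] ideal_mult_mem[OF J] by blast
qed

lemma ideal_sum_least:
  "is_ideal K \<Longrightarrow> I \<subseteq> K \<Longrightarrow> J \<subseteq> K \<Longrightarrow> ideal_sum I J \<subseteq> K"
  unfolding ideal_sum_def by (auto intro: ideal_add_mem)

lemma ideal_sum_upper1: "is_ideal J \<Longrightarrow> I \<subseteq> ideal_sum I J"
  unfolding ideal_sum_def using ideal_zero_mem by force

lemma ideal_sum_upper2: "is_ideal I \<Longrightarrow> J \<subseteq> ideal_sum I J"
  unfolding ideal_sum_def using ideal_zero_mem by force

lemma tsem_diff_mem_ideal: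
  assumes I: "is_ideal I" and \<rho>: "\<And>v. \<rho> v - \<rho>' v \<in> I"
  shows "tsem \<rho> t - tsem \<rho>' t \<in> I"
proof (induction t)
  case (TVar x)
  then show ?case using \<rho> by simp
next
  case TZero
  then show ?case using ideal_zero_mem[OF I] by simp
next
  case (TScal c u)
  have "tsem \<rho> (TScal c u) - tsem \<rho>' (TScal c u) = PConst c * (tsem \<rho> u - tsem \<rho>' u)"
    by (simp add: algebra_simps)
  then show ?case using TScal ideal_mult_mem[OF I] by metis
next
  case (TAdd u v)
  have "tsem \<rho> (TAdd u v) - tsem \<rho>' (TAdd u v)
      = (tsem \<rho> u - tsem \<rho>' u) + (tsem \<rho> v - tsem \<rho>' v)"
    by (simp add: algebra_simps)
  then show ?case using TAdd ideal_add_mem[OF I] by metis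
next
  case (TMul u v)
  have "tsem \<rho> (TMul u v) - tsem \<rho>' (TMul u v)
      = tsem \<rho> u * (tsem \<rho> v - tsem \<rho>' v) + tsem \<rho>' v * (tsem \<rho> u - tsem \<rho>' u)"
    by (simp add: algebra_simps)
  then show ?case using TMul ideal_add_mem[OF I] ideal_mult_mem[OF I] by metis
qed

lemma papp_diff_mem_ideal:
  assumes "is_ideal I" "b \<in> I" "db \<in> I"
  shows "papp P a da b db - papp P a da 0 0 \<in> I"
  unfolding papp_def
  by (rule tsem_diff_mem_ideal) (auto split: pv.split simp: assms ideal_zero_mem)

lemma is_ext_Q0: "is_ext P D Dt \<Longrightarrow> \<alpha> \<in> Q0 \<Longrightarrow> Dt \<alpha> \<in> Q0"
  by (simp add: is_ext_def)

lemma is_ext_linear: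
  "is_ext P D Dt \<Longrightarrow> \<alpha> \<in> Q0 \<Longrightarrow> \<beta> \<in> Q0 \<Longrightarrow> Dt (PConst c * \<alpha> + \<beta>) = PConst c * Dt \<alpha> + Dt \<beta>"
  by (simp add: is_ext_def)

lemma is_ext_mult:
  "is_ext P D Dt \<Longrightarrow> \<alpha> \<in> Q0 \<Longrightarrow> \<beta> \<in> Q0 \<Longrightarrow> Dt (\<alpha> * \<beta>) = papp P \<alpha> (Dt \<alpha>) \<beta> (Dt \<beta>)"
  by (simp add: is_ext_def)

lemma is_ext_zero: "is_ext P D Dt \<Longrightarrow> Dt 0 = 0"
  using is_ext_linear[of P D Dt 0 0 1] ideal_zero_mem[OF is_ideal_Q0] by simp

lemma is_ext_add: "is_ext P D Dt \<Longrightarrow> \<alpha> \<in> Q0 \<Longrightarrow> \<beta> \<in> Q0 \<Longrightarrow> Dt (\<alpha> + \<beta>) = Dt \<alpha> + Dt \<beta>"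
  using is_ext_linear[of P D Dt \<alpha> \<beta> 1] by simp

lemma is_ext_papp_zero: "is_ext P D Dt \<Longrightarrow> \<alpha> \<in> Q0 \<Longrightarrow> papp P \<alpha> (Dt \<alpha>) 0 0 = 0"
  using is_ext_mult[of P D Dt \<alpha> 0] is_ext_zero[of P D Dt] ideal_zero_mem[OF is_ideal_Q0] by simp

lemma is_ext_mult_mem_ideal:
  assumes ext: "is_ext P D Dt" and I: "is_ideal I" and q: "q \<in> Q0" "q \<in> I" "Dt q \<in> I"
  shows "Dt (r * q) \<in> I"
proof -
  define c where "c = Poly_Mapping.lookup r 0"
  define r\<^sub>0 where "r\<^sub>0 = r - PConst c"
  have r\<^sub>0: "r\<^sub>0 \<in> Q0"
    unfolding r\<^sub>0_def c_def by (rule diff_PConst_const_term_in_Q0)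
  have "Dt (r * q) = Dt (PConst c * q + r\<^sub>0 * q)"
    by (simp add: r\<^sub>0_def algebra_simps)
  also have "\<dots> = PConst c * Dt q + Dt (r\<^sub>0 * q)"
    using is_ext_linear[OF ext q(1)] ideal_mult_mem[OF is_ideal_Q0 q(1)] by blast
  also have "Dt (r\<^sub>0 * q) = papp P r\<^sub>0 (Dt r\<^sub>0) q (Dt q) - papp P r\<^sub>0 (Dt r\<^sub>0) 0 0"
    using is_ext_mult[OF ext r\<^sub>0 q(1)] is_ext_papp_zero[OF ext r\<^sub>0] by simp
  finally show ?thesis
    using papp_diff_mem_ideal[OF I q(2,3)] ideal_add_mem[OF I] ideal_mult_mem[OF I q(3)] by simp
qed

lemma is_ext_image_ideal_gen_subset:
  assumes ext: "is_ext P D Dt" and K: "is_ideal K"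
    and S: "S \<subseteq> Q0" "S \<subseteq> K" "Dt ` S \<subseteq> K"
  shows "Dt ` ideal_gen S \<subseteq> K"
proof -
  define J where "J = {q \<in> Q0. q \<in> K \<and> Dt q \<in> K}"
  have "is_ideal J"
    unfolding is_ideal_def J_def
    using ideal_zero_mem[OF K] ideal_zero_mem[OF is_ideal_Q0]
    by (auto simp: is_ext_zero[OF ext] is_ext_add[OF ext]
        intro: ideal_add_mem[OF K] ideal_add_mem[OF is_ideal_Q0] ideal_mult_mem[OF K]
          ideal_mult_mem[OF is_ideal_Q0] is_ext_mult_mem_ideal[OF ext K])
  moreover have "S \<subseteq> J"
    using S by (auto simp: J_def)
  ultimately have "ideal_gen S \<subseteq> J"
    by (rule ideal_gen_least)
  then show ?thesis
    by (auto simp: J_def)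
qed

lemma dword_append_single: "dword Dt (w @ [a]) \<alpha> = Dt a (dword Dt w \<alpha>)"
  by (induction w arbitrary: \<alpha>) auto

definition dword_gens :: "('a \<Rightarrow> 'x mpoly \<Rightarrow> 'x mpoly) \<Rightarrow> 'x \<Rightarrow> nat \<Rightarrow> 'x mpoly set" where
  "dword_gens Dt x1 n = {dword Dt w (PVar x1) | w. length w \<le> n}"

lemma In_eq_ideal_gen: "In Dt x1 n = ideal_gen (dword_gens Dt x1 n)"
  by (simp add: In_def dword_gens_def)

lemma dword_in_dword_gens: "length w \<le> n \<Longrightarrow> dword Dt w (PVar x1) \<in> dword_gens Dt x1 n"
  unfolding dword_gens_def by blast

lemma dword_gens_Suc:
  "dword_gens Dt x1 (Suc n) = dword_gens Dt x1 n \<union> (\<Union>a. Dt a ` dword_gens Dt x1 n)"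
proof (intro equalityI subsetI)
  fix g assume "g \<in> dword_gens Dt x1 (Suc n)"
  then obtain w where g: "g = dword Dt w (PVar x1)" and w: "length w \<le> Suc n"
    by (auto simp: dword_gens_def)
  show "g \<in> dword_gens Dt x1 n \<union> (\<Union>a. Dt a ` dword_gens Dt x1 n)"
  proof (cases "length w \<le> n")
    case True
    then show ?thesis
      unfolding g by (simp add: dword_in_dword_gens)
  next
    case False
    then obtain w' a where w': "w = w' @ [a]"
      by (metis le0 list.size(3) rev_exhaust)
    then have "dword Dt w' (PVar x1) \<in> dword_gens Dt x1 n"
      using w by (intro dword_in_dword_gens) simp
    then show ?thesis
      unfolding g w' dword_append_single by blast
  qed
next
  fix g assume "g \<in> dword_gens Dt x1 n \<union> (\<Union>a. Dt a ` dword_gens Dt x1 n)"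
  then consider w where "g = dword Dt w (PVar x1)" "length w \<le> n"
    | a w where "g = Dt a (dword Dt w (PVar x1))" "length w \<le> n"
    by (auto simp: dword_gens_def)
  then show "g \<in> dword_gens Dt x1 (Suc n)"
  proof cases
    case (1 w)
    then show ?thesis
      by (simp add: dword_in_dword_gens)
  next
    case (2 a w)
    then show ?thesis
      using dword_in_dword_gens[of "w @ [a]" "Suc n" Dt x1] by (simp add: dword_append_single)
  qed
qed

lemma is_ideal_In: "is_ideal (In Dt x1 n)"
  by (simp add: In_eq_ideal_gen is_ideal_ideal_gen)

lemma dword_gens_subset_In: "dword_gens Dt x1 n \<subseteq> In Dt x1 n"
  by (simp add: In_eq_ideal_gen ideal_gen_superset)

lemma In_mono_Suc: "In Dt x1 n \<subseteq> In Dt x1 (Suc n)"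
  unfolding In_eq_ideal_gen by (rule ideal_gen_mono) (simp add: dword_gens_Suc)

context
  fixes P :: prule and \<Delta> :: "'a \<Rightarrow> 'x \<Rightarrow> 'x mpoly" and Dt :: "'a \<Rightarrow> 'x mpoly \<Rightarrow> 'x mpoly"
  assumes ext: "\<And>a. is_ext P (\<Delta> a) (Dt a)"
begin

lemma dword_gens_subset_Q0: "dword_gens Dt x1 n \<subseteq> Q0"
proof -
  have dword_Q0: "dword Dt w \<alpha> \<in> Q0" if "\<alpha> \<in> Q0" for w \<alpha>
    using that by (induction w arbitrary: \<alpha>) (auto intro: is_ext_Q0[OF ext])
  show ?thesis
    using dword_Q0[OF PVar_in_Q0] by (auto simp: dword_gens_def)
qed

lemma In_image_subset: "Dt a ` In Dt x1 n \<subseteq> In Dt x1 (Suc n)"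
  unfolding In_eq_ideal_gen[of Dt x1 n]
proof (rule is_ext_image_ideal_gen_subset[OF ext is_ideal_In dword_gens_subset_Q0])
  show "dword_gens Dt x1 n \<subseteq> In Dt x1 (Suc n)"
    using dword_gens_subset_In In_mono_Suc by (rule order_trans)
  have "Dt a ` dword_gens Dt x1 n \<subseteq> dword_gens Dt x1 (Suc n)"
    unfolding dword_gens_Suc by blast
  then show "Dt a ` dword_gens Dt x1 n \<subseteq> In Dt x1 (Suc n)"
    using dword_gens_subset_In by (rule order_trans)
qed

lemma In_Suc_eq: "In Dt x1 (Suc n) = ideal_sum (In Dt x1 n) (ideal_gen (\<Union>a. Dt a ` In Dt x1 n))"
    (is "_ = ideal_sum _ ?K")
proof
  have "dword_gens Dt x1 n \<subseteq> ideal_sum (In Dt x1 n) ?K"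
    using dword_gens_subset_In ideal_sum_upper1[OF is_ideal_ideal_gen] by (rule order_trans)
  moreover have "(\<Union>a. Dt a ` dword_gens Dt x1 n) \<subseteq> ideal_sum (In Dt x1 n) ?K"
  proof -
    have "(\<Union>a. Dt a ` dword_gens Dt x1 n) \<subseteq> (\<Union>a. Dt a ` In Dt x1 n)"
      using dword_gens_subset_In[of Dt x1 n] by blast
    also have "\<dots> \<subseteq> ?K"
      by (rule ideal_gen_superset)
    also have "\<dots> \<subseteq> ideal_sum (In Dt x1 n) ?K"
      by (rule ideal_sum_upper2[OF is_ideal_In])
    finally show ?thesis .
  qed
  ultimately have "dword_gens Dt x1 (Suc n) \<subseteq> ideal_sum (In Dt x1 n) ?K"
    unfolding dword_gens_Suc by (rule Un_least)
  then show "In Dt x1 (Suc n) \<subseteq> ideal_sum (In Dt x1 n) ?K"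
    unfolding In_eq_ideal_gen[of Dt x1 "Suc n"]
    by (intro ideal_gen_least is_ideal_ideal_sum is_ideal_In is_ideal_ideal_gen)
  have "?K \<subseteq> In Dt x1 (Suc n)"
    using In_image_subset by (intro ideal_gen_least is_ideal_In) blast
  then show "ideal_sum (In Dt x1 n) ?K \<subseteq> In Dt x1 (Suc n)"
    by (intro ideal_sum_least is_ideal_In In_mono_Suc)
qed

lemma In_stable:
  assumes "In Dt x1 n = In Dt x1 (Suc n)"
  shows "In Dt x1 n = In Dt x1 (n + m)"
proof (induction m)
  case 0
  show ?case by simp
next
  case (Suc m)
  have "In Dt x1 n = In Dt x1 (Suc n)"
    by (fact assms)
  also have "\<dots> = ideal_sum (In Dt x1 n) (ideal_gen (\<Union>a. Dt a ` In Dt x1 n))"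
    by (fact In_Suc_eq)
  also have "\<dots> = ideal_sum (In Dt x1 (n + m)) (ideal_gen (\<Union>a. Dt a ` In Dt x1 (n + m)))"
    by (simp only: Suc.IH)
  also have "\<dots> = In Dt x1 (Suc (n + m))"
    by (fact In_Suc_eq[symmetric])
  finally show ?case
    by simp
qed

end

theorem mainTheorem13:
  fixes P :: prule
    and F :: "'x::finite \<Rightarrow> rat"
    and \<Delta> :: "'a::finite \<Rightarrow> 'x \<Rightarrow> 'x mpoly"
    and Dt :: "'a \<Rightarrow> 'x mpoly \<Rightarrow> 'x mpoly"
    and x1 :: 'x
  assumes "special P"
    and "\<forall>a x. \<Delta> a x \<in> Q0"
    and "\<forall>a. is_ext P (\<Delta> a) (Dt a)"
  shows "\<forall>n. In Dt x1 n \<subseteq> In Dt x1 (Suc n)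
          \<and> (\<forall>a. Dt a ` In Dt x1 n \<subseteq> In Dt x1 (Suc n))
          \<and> In Dt x1 (Suc n) = {p + q | p q. p \<in> In Dt x1 n \<and> q \<in> ideal_gen (\<Union>a. Dt a ` In Dt x1 n)}
          \<and> (In Dt x1 n = In Dt x1 (Suc n) \<longrightarrow> (\<forall>m. In Dt x1 n = In Dt x1 (n + m)))"
proof -
  \<comment> \<open>That \<open>P\<close> is special and \<open>\<Delta>\<close> maps into \<open>Q0\<close> only ensures that the extensions
    \<open>Dt a\<close> exist; the argument needs nothing beyond \<open>is_ext\<close>.\<close>
  have ext: "\<And>a. is_ext P (\<Delta> a) (Dt a)"
    using assms(3) by blast
  show ?thesis
  proof (intro allI conjI impI)
    fix n
    show "In Dt x1 n \<subseteq> In Dt x1 (Suc n)"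
      by (fact In_mono_Suc)
    show "In Dt x1 (Suc n) = {p + q | p q. p \<in> In Dt x1 n \<and> q \<in> ideal_gen (\<Union>a. Dt a ` In Dt x1 n)}"
      unfolding ideal_sum_def[symmetric] by (fact In_Suc_eq[OF ext])
  next
    fix n a
    show "Dt a ` In Dt x1 n \<subseteq> In Dt x1 (Suc n)"
      by (fact In_image_subset[OF ext])
  next
    fix n m
    assume "In Dt x1 n = In Dt x1 (Suc n)"
    then show "In Dt x1 n = In Dt x1 (n + m)"
      by (rule In_stable[OF ext])
  qed
qed

end
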